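(* For every $n\ge 3$ and every $0\le h\le n-2$, $\kappa_s^{(h)}(S_{n,2})=n-1$.
   Context: For integers $1\le k\le n-1$, let $I_n=\{1,\dots,n\}$ and $P(n,k)$ the set of $k$-permutations $p_1p_2\cdots p_k$ of distinct elements of $I_n$. The $(n,k)$-star graph $S_{n,k}$ has vertex set $P(n,k)$; a vertex $p=p_1p_2\cdots p_k$ is adjacent to (a) each vertex obtained by swapping $p_1$ with $p_i$ for $2\le i\le k$, and (b) each vertex $\alpha p_2\cdots p_k$ with $\alpha\in I_n\setminus\{p_1,\dots,p_k\}$. For a connected graph $G$ and integer $h\ge 0$, a set $S\subseteq V(G)$ is an $h$-cut if $G-S$ is disconnected and has minimum degree at least $h$; $\kappa_s^{(h)}(G)$ is the minimum cardinality of an $h$-cut of $G$. *)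

theory Defs
  imports Main
begin

definition induced_connected :: "'a set \<Rightarrow> ('a \<Rightarrow> 'a \<Rightarrow> bool) \<Rightarrow> bool" where
  "induced_connected W E \<longleftrightarrow> W \<noteq> {} \<and>
     (\<forall>x\<in>W. \<forall>y\<in>W. (\<lambda>u v. u \<in> W \<and> v \<in> W \<and> E u v)\<^sup>*\<^sup>* x y)"

definition induced_degree :: "'a set \<Rightarrow> ('a \<Rightarrow> 'a \<Rightarrow> bool) \<Rightarrow> 'a \<Rightarrow> nat" where
  "induced_degree W E v = card {u \<in> W. E v u}"

definition is_h_cut :: "'a set \<Rightarrow> ('a \<Rightarrow> 'a \<Rightarrow> bool) \<Rightarrow> nat \<Rightarrow> 'a set \<Rightarrow> bool" where
  "is_h_cut V E h S \<longleftrightarrow> S \<subseteq> V \<and> V - S \<noteq> {} \<and> \<not> induced_connected (V - S) E \<and>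
     (\<forall>v \<in> V - S. induced_degree (V - S) E v \<ge> h)"

definition kappa_s :: "'a set \<Rightarrow> ('a \<Rightarrow> 'a \<Rightarrow> bool) \<Rightarrow> nat \<Rightarrow> nat" where
  "kappa_s V E h = Inf {card S | S. is_h_cut V E h S}"

text \<open>(n,k)-star graph: vertices are k-permutations of {1..n}, represented as lists.\<close>
definition star_verts :: "nat \<Rightarrow> nat \<Rightarrow> nat list set" where
  "star_verts n k = {p. length p = k \<and> distinct p \<and> set p \<subseteq> {1..n}}"

definition swap0 :: "nat list \<Rightarrow> nat \<Rightarrow> nat list" where
  "swap0 p i = p[0 := p ! i, i := p ! 0]"

definition star_adj :: "nat \<Rightarrow> nat \<Rightarrow> nat list \<Rightarrow> nat list \<Rightarrow> bool" where
  "star_adj n k p q \<longleftrightarrow> p \<in> star_verts n k \<and> q \<in> star_verts n k \<and>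
     ((\<exists>i. 1 \<le> i \<and> i < k \<and> q = swap0 p i) \<or>
      (\<exists>a \<in> {1..n} - set p. q = p[0 := a]))"

end

theory Submission
  imports Defs
begin

(* The (n,2)-star graph S_{n,2} has as vertices the ordered pairs [a,b] of distinct
   elements of {1..n}; [a,b] is adjacent to its swap [b,a] and to every [e,b] with
   e \<notin> {a,b}.  So the vertices with a common second entry b form a clique K_b, and
   the swap edges link the cliques.

   Lower bound (vertex connectivity is at least n - 1): if |S| < n - 1, any two
   surviving vertices [a,b], [e,c] with b \<noteq> c can be joined via some d for which
   the four vertices [d,b], [b,d], [c,d], [d,c] all survive: each deleted vertex
   rules out at most one candidate d, and there are n - 1 candidates.
   Upper bound: deleting the n - 1 vertices [1,x] isolates the remaining part of
   the clique K_1 from the rest, and every surviving vertex keeps at least n - 2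
   neighbours, so this is an h-cut for all h \<le> n - 2.
   Both bounds together determine kappa_s, since it is the minimum of the cut sizes. *)

definition induced_reach :: "'a set \<Rightarrow> ('a \<Rightarrow> 'a \<Rightarrow> bool) \<Rightarrow> 'a \<Rightarrow> 'a \<Rightarrow> bool" where
  "induced_reach W E = (\<lambda>u v. u \<in> W \<and> v \<in> W \<and> E u v)\<^sup>*\<^sup>*"

lemma induced_connected_iff_reach:
  "induced_connected W E \<longleftrightarrow> W \<noteq> {} \<and> (\<forall>x\<in>W. \<forall>y\<in>W. induced_reach W E x y)"
  by (simp add: induced_connected_def induced_reach_def)

lemma induced_reach_edge:
  "u \<in> W \<Longrightarrow> v \<in> W \<Longrightarrow> E u v \<Longrightarrow> induced_reach W E u v"
  unfolding induced_reach_def by (rule r_into_rtranclp) simp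

lemma induced_reach_trans:
  "induced_reach W E x y \<Longrightarrow> induced_reach W E y z \<Longrightarrow> induced_reach W E x z"
  unfolding induced_reach_def by (rule rtranclp_trans)

lemma kappa_s_eqI:
  assumes "is_h_cut V E h S0" and "card S0 = m"
    and "\<And>S. is_h_cut V E h S \<Longrightarrow> m \<le> card S"
  shows "kappa_s V E h = m"
  unfolding kappa_s_def using assms by (intro cInf_eq_minimum) auto

lemma star_verts2_Cons:
  "[a, b] \<in> star_verts n 2 \<longleftrightarrow> a \<noteq> b \<and> a \<in> {1..n} \<and> b \<in> {1..n}"
  by (auto simp: star_verts_def)

lemma star_verts2_cases:
  assumes "p \<in> star_verts n 2"
  obtains a b where "p = [a, b]" "a \<noteq> b" "a \<in> {1..n}" "b \<in> {1..n}"
proof -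
  have "length p = 2" using assms by (simp add: star_verts_def)
  then obtain a b where "p = [a, b]" by (cases p; cases "tl p") auto
  with assms that show thesis by (simp add: star_verts2_Cons)
qed

lemma finite_star_verts: "finite (star_verts n k)"
proof -
  have "star_verts n k \<subseteq> {xs. set xs \<subseteq> {1..n} \<and> length xs = k}"
    by (auto simp: star_verts_def)
  thus ?thesis using finite_lists_length_eq[of "{1..n}" k] finite_subset by blast
qed

lemma star_adj2_Cons:
  "star_adj n 2 [a, b] q \<longleftrightarrow> [a, b] \<in> star_verts n 2 \<and> q \<in> star_verts n 2 \<and>
     (q = [b, a] \<or> (\<exists>e \<in> {1..n}. e \<noteq> a \<and> e \<noteq> b \<and> q = [e, b]))"
proof -
  have "(\<exists>i. 1 \<le> i \<and> i < (2::nat) \<and> q = swap0 [a, b] i) \<longleftrightarrow> q = [b, a]"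
  proof
    assume "\<exists>i. 1 \<le> i \<and> i < (2::nat) \<and> q = swap0 [a, b] i"
    then obtain i where "1 \<le> i" "i < (2::nat)" "q = swap0 [a, b] i" by blast
    moreover from this have "i = 1" by simp
    ultimately show "q = [b, a]" by (simp add: swap0_def)
  next
    assume "q = [b, a]"
    thus "\<exists>i. 1 \<le> i \<and> i < (2::nat) \<and> q = swap0 [a, b] i"
      by (intro exI[of _ 1]) (simp add: swap0_def)
  qed
  thus ?thesis unfolding star_adj_def by auto
qed

lemma reach_clique:
  assumes "[x, q] \<in> W" "[y, q] \<in> W" "W \<subseteq> star_verts n 2"
  shows "induced_reach W (star_adj n 2) [x, q] [y, q]"
proof (cases "x = y")
  case True thus ?thesis by (simp add: induced_reach_def)
next
  case False
  have "[x, q] \<in> star_verts n 2" "[y, q] \<in> star_verts n 2" using assms by auto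
  with False have "star_adj n 2 [x, q] [y, q]"
    by (auto simp: star_adj2_Cons star_verts2_Cons)
  with assms show ?thesis by (intro induced_reach_edge)
qed

lemma reach_swap:
  assumes "[x, q] \<in> W" "[q, x] \<in> W" "W \<subseteq> star_verts n 2"
  shows "induced_reach W (star_adj n 2) [x, q] [q, x]"
  using assms by (intro induced_reach_edge) (auto simp: star_adj2_Cons)

section \<open>Lower bound: S_{n,2} is (n-1)-connected\<close>

(* d is a clear bridge from the clique K_b to K_c when the four vertices on the path
   K_b \<rightarrow> [b,d] \<rightarrow> K_d \<rightarrow> [d,c] \<rightarrow> K_c all survive the deletion of S. *)
definition clear_bridge :: "nat list set \<Rightarrow> nat \<Rightarrow> nat \<Rightarrow> nat \<Rightarrow> bool" where
  "clear_bridge S b c d \<longleftrightarrow> [d, b] \<notin> S \<and> [b, d] \<notin> S \<and> [c, d] \<notin> S \<and> [d, c] \<notin> S"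

(* Pigeonhole: every deleted vertex blocks at most one candidate d. *)
lemma clear_bridge_exists:
  assumes "finite S" "card S < n - 1" "b \<in> {1..n}" "b \<noteq> c"
  shows "\<exists>d \<in> {1..n} - {b}. clear_bridge S b c d"
proof (rule ccontr)
  assume none: "\<not> ?thesis"
  define g where "g x = (if x!1 = b then x!0 else if x!0 = b then x!1
                         else if x!0 = c then x!1 else x!0)" for x :: "nat list"
  have "{1..n} - {b} \<subseteq> g ` S"
  proof
    fix d assume d: "d \<in> {1..n} - {b}"
    hence "[d, b] \<in> S \<or> [b, d] \<in> S \<or> [c, d] \<in> S \<or> [d, c] \<in> S"
      using none by (auto simp: clear_bridge_def)
    moreover have "g [d, b] = d" "g [b, d] = d" "g [c, d] = d" "g [d, c] = d"
      using d assms(4) by (auto simp: g_def)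
    ultimately show "d \<in> g ` S" by (metis imageI)
  qed
  hence "card ({1..n} - {b}) \<le> card (g ` S)" using assms(1) by (intro card_mono) auto
  also have "\<dots> \<le> card S" using assms(1) by (rule card_image_le)
  finally show False using assms(2,3) by simp
qed

lemma reach_via_bridge:
  assumes W: "W = star_verts n 2 - S"
    and u: "[a, b] \<in> W" and v: "[e, c] \<in> W" and bc: "b \<noteq> c"
    and d: "d \<in> {1..n}" "d \<noteq> b" "clear_bridge S b c d"
  shows "induced_reach W (star_adj n 2) [a, b] [e, c]"
proof -
  have WV: "W \<subseteq> star_verts n 2" using W by auto
  have b: "b \<in> {1..n}" and c: "c \<in> {1..n}" using u v W by (auto simp: star_verts2_Cons)
  have db: "[d, b] \<in> W" "[b, d] \<in> W"
    using d b W by (auto simp: star_verts2_Cons clear_bridge_def)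
  have to_bd: "induced_reach W (star_adj n 2) [a, b] [b, d]"
    using reach_clique[OF u db(1) WV] reach_swap[OF db WV] by (rule induced_reach_trans)
  show ?thesis
  proof (cases "d = c")
    case True
    with v have "[e, d] \<in> W" by simp
    with to_bd show ?thesis
      using True reach_clique[OF db(2) _ WV] by (blast intro: induced_reach_trans)
  next
    case False
    have dc: "[c, d] \<in> W" "[d, c] \<in> W"
      using d c bc False W by (auto simp: star_verts2_Cons clear_bridge_def)
    have "induced_reach W (star_adj n 2) [b, d] [d, c]"
      using reach_clique[OF db(2) dc(1) WV] reach_swap[OF dc WV] by (rule induced_reach_trans)
    with to_bd have "induced_reach W (star_adj n 2) [a, b] [d, c]"
      by (rule induced_reach_trans)
    thus ?thesis using reach_clique[OF dc(2) v WV] by (rule induced_reach_trans)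
  qed
qed

lemma star2_connectivity_lower:
  assumes S: "S \<subseteq> star_verts n 2" and ne: "star_verts n 2 - S \<noteq> {}"
    and disconn: "\<not> induced_connected (star_verts n 2 - S) (star_adj n 2)"
  shows "n - 1 \<le> card S"
proof (rule ccontr)
  assume small: "\<not> n - 1 \<le> card S"
  define W where "W = star_verts n 2 - S"
  have fin: "finite S" using S finite_star_verts finite_subset by blast
  have "induced_reach W (star_adj n 2) u v" if u: "u \<in> W" and v: "v \<in> W" for u v
  proof -
    obtain a b where ab: "u = [a, b]" "b \<in> {1..n}"
      using u by (auto simp: W_def elim: star_verts2_cases)
    obtain e c where ec: "v = [e, c]"
      using v by (auto simp: W_def elim: star_verts2_cases)
    show ?thesis
    proof (cases "b = c")
      case True thus ?thesis using reach_clique[of a b W e n] u v ab ec by (auto simp: W_def)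
    next
      case False
      moreover have "card S < n - 1" using small by simp
      ultimately obtain d where "d \<in> {1..n} - {b}" "clear_bridge S b c d"
        using clear_bridge_exists[OF fin _ ab(2)] by blast
      thus ?thesis using reach_via_bridge[OF W_def] u v ab ec False by auto
    qed
  qed
  hence "induced_connected W (star_adj n 2)"
    using ne by (auto simp: induced_connected_iff_reach W_def)
  with disconn show False by (simp add: W_def)
qed

section \<open>Upper bound: an h-cut of size n - 1\<close>

definition first_one_cut :: "nat \<Rightarrow> nat list set" where
  "first_one_cut n = (\<lambda>x. [1, x]) ` {2..n}"

lemma card_first_one_cut: "card (first_one_cut n) = n - 1"
  unfolding first_one_cut_def by (subst card_image) (auto simp: inj_on_def)

lemma first_one_cut_Cons: "[x, y] \<in> first_one_cut n \<longleftrightarrow> x = 1 \<and> y \<in> {2..n}"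
  by (auto simp: first_one_cut_def)

(* Survivors with second entry 1 only reach survivors with second entry 1:
   their swap [1,x] is deleted, so only clique edges inside K_1 remain. *)
lemma reach_keeps_second_one:
  assumes "induced_reach (star_verts n 2 - first_one_cut n) (star_adj n 2) x y"
    and "x ! 1 = 1"
  shows "y ! 1 = 1"
  using assms unfolding induced_reach_def
proof (induction rule: rtranclp_induct)
  case base thus ?case .
next
  case (step y z)
  then obtain a b where ab: "y = [a, b]" "b = 1"
    by (auto elim: star_verts2_cases)
  have "z \<noteq> [b, a]" using step(2) ab by (auto simp: first_one_cut_Cons star_verts2_Cons)
  with step(2) ab show ?case by (auto simp: star_adj2_Cons)
qed

lemma first_one_cut_disconnects:
  assumes "n \<ge> 3"
  shows "\<not> induced_connected (star_verts n 2 - first_one_cut n) (star_adj n 2)"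
proof -
  have "[2, 1] \<in> star_verts n 2 - first_one_cut n" "[2, 3] \<in> star_verts n 2 - first_one_cut n"
    using assms by (auto simp: first_one_cut_Cons star_verts2_Cons)
  moreover have "\<not> induced_reach (star_verts n 2 - first_one_cut n) (star_adj n 2) [2, 1] [2, 3]"
    using reach_keeps_second_one by fastforce
  ultimately show ?thesis by (auto simp: induced_connected_iff_reach)
qed

(* Every survivor keeps at least n - 2 neighbours: a survivor [p,1] (whose swap is
   deleted) keeps the n - 2 vertices [x,1] with x \<notin> {1,p}; a survivor [p,q] with
   q \<noteq> 1 keeps its swap [q,p] and the n - 3 vertices [x,q] with x \<notin> {1,p,q}. *)
lemma first_one_cut_degree:
  assumes n: "n \<ge> 3" and v: "v \<in> star_verts n 2 - first_one_cut n"
  shows "n - 2 \<le> induced_degree (star_verts n 2 - first_one_cut n) (star_adj n 2) v"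
proof -
  let ?W = "star_verts n 2 - first_one_cut n"
  let ?N = "{u \<in> ?W. star_adj n 2 v u}"
  obtain p q where pq: "v = [p, q]" using v by (auto elim: star_verts2_cases)
  hence p: "p \<noteq> q" "p \<in> {1..n}" "q \<in> {1..n}" "p \<noteq> 1"
    using v by (auto simp: first_one_cut_Cons star_verts2_Cons)
  have fin: "finite ?N" using finite_star_verts[of n 2] by (rule finite_subset[rotated]) auto
  have "n - 2 \<le> card ?N"
  proof (cases "q = 1")
    case True
    have sub: "(\<lambda>x. [x, 1]) ` ({2..n} - {p}) \<subseteq> ?N"
      using pq p True by (auto simp: first_one_cut_Cons star_verts2_Cons star_adj2_Cons)
    have "card ((\<lambda>x. [x, 1]) ` ({2..n} - {p})) = n - 2"
      using p by (subst card_image) (auto simp: inj_on_def)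
    thus ?thesis using card_mono[OF fin sub] by simp
  next
    case False
    let ?K = "(\<lambda>x. [x, q]) ` ({2..n} - {p, q})"
    have sub: "insert [q, p] ?K \<subseteq> ?N"
      using pq p False by (auto simp: first_one_cut_Cons star_verts2_Cons star_adj2_Cons)
    have "card ?K = n - 3"
      using p False by (subst card_image) (auto simp: inj_on_def card_Diff_subset)
    moreover have "[q, p] \<notin> ?K" using p by auto
    ultimately have "card (insert [q, p] ?K) = n - 2" using n by simp
    thus ?thesis using card_mono[OF fin sub] by simp
  qed
  thus ?thesis by (simp add: induced_degree_def)
qed

lemma first_one_cut_is_h_cut:
  assumes "n \<ge> 3" and "h \<le> n - 2"
  shows "is_h_cut (star_verts n 2) (star_adj n 2) h (first_one_cut n)"
proof -
  have "first_one_cut n \<subseteq> star_verts n 2" by (auto simp: first_one_cut_def star_verts2_Cons)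
  moreover have "[2, 1] \<in> star_verts n 2 - first_one_cut n"
    using assms by (auto simp: first_one_cut_Cons star_verts2_Cons)
  moreover have "h \<le> induced_degree (star_verts n 2 - first_one_cut n) (star_adj n 2) v"
    if "v \<in> star_verts n 2 - first_one_cut n" for v
    using first_one_cut_degree[OF assms(1) that] assms(2) by (rule le_trans[rotated])
  ultimately show ?thesis
    using first_one_cut_disconnects[OF assms(1)] unfolding is_h_cut_def by blast
qed

theorem corollary3p2:
  fixes n h :: nat
  assumes "n \<ge> 3" and "h \<le> n - 2"
  shows "kappa_s (star_verts n 2) (star_adj n 2) h = n - 1"
proof (rule kappa_s_eqI)
  show "is_h_cut (star_verts n 2) (star_adj n 2) h (first_one_cut n)"
    using assms by (rule first_one_cut_is_h_cut)
  show "card (first_one_cut n) = n - 1" by (rule card_first_one_cut)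
  show "n - 1 \<le> card S" if "is_h_cut (star_verts n 2) (star_adj n 2) h S" for S
    using that unfolding is_h_cut_def by (intro star2_connectivity_lower) auto
qed

end
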